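(* Let $n=2$ and let $\mathcal M_1=\begin{pmatrix}\frac12&\frac12\\ \frac12&\frac12\end{pmatrix}$ and $\mathcal M_2=\begin{pmatrix}\frac{9}{10}&\frac{1}{10}\\ \frac1{10}&\frac9{10}\end{pmatrix}$. Then (i) there is a directed $3$-regular multigraph on $[2]$ whose throughput with respect to $\mathcal M_1$ is at least $\frac89$, but no directed $3$-regular multigraph on $[2]$ has weak direct throughput with respect to $\mathcal M_1$ greater than $\frac56$; and (ii) there is a directed $3$-regular multigraph on $[2]$ whose weak direct throughput with respect to $\mathcal M_2$ is at least $\frac9{10}$, but no directed $3$-regular multigraph on $[2]$ has throughput with respect to $\mathcal M_2$ at least $\frac9{10}$.
   Context: Let $n\ge 1$ and $[n]=\{1,\dots,n\}$. Networks are finite directed multigraphs on vertex set $[n]$; self-loops and parallel arcs are allowed. A directed multigraph is directed $r$-regular if every vertex has exactly $r$ outgoing and exactly $r$ incoming arcs (a self-loop at $v$ counts as one outgoing and one incoming arc of $v$). A path is a non-empty sequence of arcs $((u_1,v_1),\dots,(u_\ell,v_\ell))$ with $v_i=u_{i+1}$ for $i<\ell$; it goes from $u_1$ to $v_\ell$ and has length $\ell\ge 1$. An $n\times n$ matrix is doubly stochastic if all entries are nonnegative and every row and every column sums to $1$. In a directed $(2n-1)$-regular multigraph $G$ on $[n]$ every arc has capacity $\frac{1}{2n-1}$. $G$ hosts a nonnegative $n\times n$ matrix $\mathcal M=(a_{i,j})$ if there is a finite collection $\{(P_k,d_k)\}$, where each $P_k$ is a path in $G$ from some $s_k$ to some $t_k$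 and $d_k\ge 0$, such that $\sum_{k:\,s_k=u,\,t_k=v} d_k=a_{u,v}$ for all $u,v\in[n]$, and for every arc $e$ of $G$ (parallel arcs are distinct) $\sum_{k:\,e\in P_k} d_k\le \frac{1}{2n-1}$. $G$ directly hosts $\mathcal M$ if this is possible with all paths $P_k$ of length $1$. For doubly stochastic $\mathcal M=(a_{i,j})$: the throughput of $G$ is the largest $\theta$ such that $G$ hosts $\theta\mathcal M$; the weak direct throughput of $G$ is the largest $\eta$ such that $G$ directly hosts some matrix $\mathcal M'=(a'_{i,j})$ with $0\le a'_{i,j}\le a_{i,j}$ for all $i,j$ and $\sum_{i,j}a'_{i,j}=\eta n$. *)

theory Defs
  imports Main "HOL-Library.Multiset" Complex_Main
begin

text \<open>A finite directed multigraph: arcs are identified by natural numbers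
 (so parallel arcs are distinct objects), each arc has a source and a target.\<close>
record mgraph =
  arcs :: "nat set"
  src  :: "nat \<Rightarrow> nat"
  tgt  :: "nat \<Rightarrow> nat"

definition regular_mgraph :: "nat \<Rightarrow> nat \<Rightarrow> mgraph \<Rightarrow> bool" where
  "regular_mgraph n r G \<longleftrightarrow>
     finite (arcs G) \<and>
     (\<forall>e\<in>arcs G. src G e \<in> {1..n} \<and> tgt G e \<in> {1..n}) \<and>
     (\<forall>v\<in>{1..n}. card {e\<in>arcs G. src G e = v} = r \<and> card {e\<in>arcs G. tgt G e = v} = r)"

definition is_path :: "mgraph \<Rightarrow> nat list \<Rightarrow> bool" where
  "is_path G P \<longleftrightarrow> P \<noteq> [] \<and> set P \<subseteq> arcs G \<and>
     (\<forall>i. Suc i < length P \<longrightarrow> tgt G (P ! i) = src G (P ! Suc i))"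

definition path_start :: "mgraph \<Rightarrow> nat list \<Rightarrow> nat" where
  "path_start G P = src G (hd P)"

definition path_end :: "mgraph \<Rightarrow> nat list \<Rightarrow> nat" where
  "path_end G P = tgt G (last P)"

definition hosts_gen :: "bool \<Rightarrow> nat \<Rightarrow> mgraph \<Rightarrow> (nat \<Rightarrow> nat \<Rightarrow> real) \<Rightarrow> bool" where
  "hosts_gen direct n G a \<longleftrightarrow>
     (\<exists>F :: (nat list \<times> real) list.
        (\<forall>(P, d) \<in> set F. is_path G P \<and> d \<ge> 0 \<and> (direct \<longrightarrow> length P = 1)) \<and>
        (\<forall>u\<in>{1..n}. \<forall>v\<in>{1..n}.
            sum_list (map (\<lambda>(P, d). if path_start G P = u \<and> path_end G P = v then d else 0) F)
              = a u v) \<and>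
        (\<forall>e\<in>arcs G.
            sum_list (map (\<lambda>(P, d). if e \<in> set P then d else 0) F)
              \<le> 1 / (2 * real n - 1)))"

definition hosts :: "nat \<Rightarrow> mgraph \<Rightarrow> (nat \<Rightarrow> nat \<Rightarrow> real) \<Rightarrow> bool" where
  "hosts n G a = hosts_gen False n G a"

definition directly_hosts :: "nat \<Rightarrow> mgraph \<Rightarrow> (nat \<Rightarrow> nat \<Rightarrow> real) \<Rightarrow> bool" where
  "directly_hosts n G a = hosts_gen True n G a"

definition throughput :: "nat \<Rightarrow> mgraph \<Rightarrow> (nat \<Rightarrow> nat \<Rightarrow> real) \<Rightarrow> real" where
  "throughput n G M = Sup {\<theta>. hosts n G (\<lambda>i j. \<theta> * M i j)}"

definition weak_direct_throughput :: "nat \<Rightarrow> mgraph \<Rightarrow> (nat \<Rightarrow> nat \<Rightarrow> real) \<Rightarrow> real" where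
  "weak_direct_throughput n G M = Sup {\<eta>. \<exists>M'.
      (\<forall>i\<in>{1..n}. \<forall>j\<in>{1..n}. 0 \<le> M' i j \<and> M' i j \<le> M i j) \<and>
      (\<Sum>i\<in>{1..n}. \<Sum>j\<in>{1..n}. M' i j) = \<eta> * real n \<and>
      directly_hosts n G M'}"

definition M1 :: "nat \<Rightarrow> nat \<Rightarrow> real" where
  "M1 i j = 1/2"

definition M2 :: "nat \<Rightarrow> nat \<Rightarrow> real" where
  "M2 i j = (if i = j then 9/10 else 1/10)"

end

theory Submission
  imports Defs
begin

(* Upper bounds come from weak LP duality: if every arc gets a length w >= 0 and c u v is at most
   the w-length of every admissible path from u to v, then every hosted matrix a satisfies
   sum a u v * c u v <= (total length) / (2n - 1).  With length alpha on loops and beta on the other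
   arcs, alpha <= 2 beta, one may take c = alpha on the diagonal and beta off it, because a closed
   path uses a loop or two distinct non-loops.  A 3-regular multigraph on two vertices has some
   number k of loops at each vertex and 3 - k parallel arcs in each direction.  For M2 the lengths
   (2, 1) give theta <= 50/57 when k <= 2, and the cut lengths (0, 1) give theta <= 0 when k = 3.
   A directly hosted entry is at most (number of parallel arcs) / 3; with the entries 1/2 of M1
   this bounds every row of a directly hosted part of M1 by 1/3 + 1/2.
   The lower bounds are explicit routings: with one loop and two parallel arcs in each direction,
   each diagonal demand 4/9 of (8/9) M1 goes 1/3 over the loop and 1/9 along a two-arc detour;
   with three loops at each vertex the diagonal of M2 is hosted directly. *)

definition arcs_between :: "mgraph \<Rightarrow> nat \<Rightarrow> nat \<Rightarrow> nat set" where
  "arcs_between G u v = {e \<in> arcs G. src G e = u \<and> tgt G e = v}"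

definition routed_amount :: "mgraph \<Rightarrow> (nat list \<times> real) list \<Rightarrow> nat \<Rightarrow> nat \<Rightarrow> real" where
  "routed_amount G F u v =
     sum_list (map (\<lambda>(P, d). if path_start G P = u \<and> path_end G P = v then d else 0) F)"

definition arc_load :: "mgraph \<Rightarrow> (nat list \<times> real) list \<Rightarrow> nat \<Rightarrow> real" where
  "arc_load G F e = sum_list (map (\<lambda>(P, d). if e \<in> set P then d else 0) F)"

lemma hosts_gen_iff:
  "hosts_gen dir n G a \<longleftrightarrow>
     (\<exists>F. (\<forall>(P, d) \<in> set F. is_path G P \<and> 0 \<le> d \<and> (dir \<longrightarrow> length P = 1)) \<and>
          (\<forall>u\<in>{1..n}. \<forall>v\<in>{1..n}. routed_amount G F u v = a u v) \<and>
          (\<forall>e\<in>arcs G. arc_load G F e \<le> 1 / (2 * real n - 1)))"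
  unfolding hosts_gen_def routed_amount_def arc_load_def ..

lemma hosts_gen_zero: "0 < n \<Longrightarrow> hosts_gen dir n G (\<lambda>_ _. 0)"
  unfolding hosts_gen_def by (rule exI[of _ "[]"]) simp

lemma is_path_single [simp]: "is_path G [e] \<longleftrightarrow> e \<in> arcs G"
  by (simp add: is_path_def)

lemma is_path_Cons_Cons [simp]:
  "is_path G (e # e' # P) \<longleftrightarrow> e \<in> arcs G \<and> tgt G e = src G e' \<and> is_path G (e' # P)"
  by (auto simp: is_path_def nth_Cons less_Suc_eq_0_disj split: nat.splits)

lemma path_leaves_set:
  assumes "is_path G P" "path_start G P \<in> S" "path_end G P \<notin> S"
  shows "\<exists>e\<in>set P. src G e \<in> S \<and> tgt G e \<notin> S"
  using assms
proof (induction P rule: induct_list012)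
  case (3 e e' P)
  then show ?case
    by (cases "tgt G e \<in> S") (auto simp: path_start_def path_end_def)
qed (auto simp: is_path_def path_start_def path_end_def)

lemma closed_path_loop_or_two_nonloops:
  assumes "is_path G P" "path_start G P = path_end G P"
  shows "(\<exists>e\<in>set P. src G e = tgt G e) \<or>
         (\<exists>e\<in>set P. \<exists>e'\<in>set P. e \<noteq> e' \<and> src G e \<noteq> tgt G e \<and> src G e' \<noteq> tgt G e')"
proof -
  have "hd P \<in> set P" "last P \<in> set P"
    using assms(1) by (auto simp: is_path_def)
  moreover have "hd P = last P \<Longrightarrow> src G (hd P) = tgt G (hd P)"
    using assms(2) by (simp add: path_start_def path_end_def)
  ultimately show ?thesis by metis
qed

definition loop_cost :: "real \<Rightarrow> real \<Rightarrow> nat \<Rightarrow> nat \<Rightarrow> real" where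
  "loop_cost \<alpha> \<beta> u v = (if u = v then \<alpha> else \<beta>)"

lemma loop_cost_path_le:
  assumes P: "is_path G P" and "0 \<le> \<alpha>" "\<alpha> \<le> 2 * \<beta>"
  shows "loop_cost \<alpha> \<beta> (path_start G P) (path_end G P) \<le> (\<Sum>e\<in>set P. loop_cost \<alpha> \<beta> (src G e) (tgt G e))"
    (is "?c (path_start G P) (path_end G P) \<le> sum ?w (set P)")
proof -
  have nonneg: "\<forall>e\<in>set P. 0 \<le> ?w e"
    using assms by (simp add: loop_cost_def)
  show ?thesis
  proof (cases "path_start G P = path_end G P")
    case True
    then consider e where "e \<in> set P" "src G e = tgt G e"
      | e e' where "e \<in> set P" "e' \<in> set P" "e \<noteq> e'" "src G e \<noteq> tgt G e" "src G e' \<noteq> tgt G e'"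
      using closed_path_loop_or_two_nonloops[OF P] by blast
    then show ?thesis
    proof cases
      case 1
      then show ?thesis
        using True member_le_sum[of e "set P" ?w] nonneg by (simp add: loop_cost_def)
    next
      case 2
      then have "sum ?w {e, e'} \<le> sum ?w (set P)"
        using nonneg by (intro sum_mono2) auto
      then show ?thesis
        using True 2 assms by (simp add: loop_cost_def)
    qed
  next
    case False
    then obtain e where "e \<in> set P" "src G e \<noteq> tgt G e"
      using path_leaves_set[OF P, of "{path_start G P}"] by auto
    then show ?thesis
      using False member_le_sum[of e "set P" ?w] nonneg by (simp add: loop_cost_def)
  qed
qed

lemma weighted_routed_amount_le_weighted_load:
  fixes c :: "nat \<Rightarrow> nat \<Rightarrow> real" and w :: "nat \<Rightarrow> real"
  assumes V: "finite V" and fin: "finite (arcs G)" and w: "\<forall>e\<in>arcs G. 0 \<le> w e"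
    and F: "\<forall>(P, d)\<in>set F. 0 \<le> d \<and> set P \<subseteq> arcs G \<and>
              c (path_start G P) (path_end G P) \<le> (\<Sum>e\<in>set P. w e)"
  shows "(\<Sum>u\<in>V. \<Sum>v\<in>V. routed_amount G F u v * c u v) \<le> (\<Sum>e\<in>arcs G. w e * arc_load G F e)"
  using F
proof (induction F)
  case Nil
  then show ?case by (simp add: routed_amount_def arc_load_def)
next
  case (Cons Pd F)
  obtain P d where Pd: "Pd = (P, d)" by fastforce
  let ?s = "path_start G P" and ?t = "path_end G P"
  have d: "0 \<le> d" and P: "set P \<subseteq> arcs G" and c: "c ?s ?t \<le> (\<Sum>e\<in>set P. w e)"
    using Cons.prems Pd by auto
  have "(\<Sum>u\<in>V. \<Sum>v\<in>V. (if ?s = u \<and> ?t = v then d else 0) * c u v)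
        = (\<Sum>u\<in>V. if ?s = u then \<Sum>v\<in>V. if ?t = v then d * c u v else 0 else 0)"
    by (auto intro!: sum.cong)
  also have "\<dots> = (if ?s \<in> V \<and> ?t \<in> V then d * c ?s ?t else 0)"
    using V by simp
  also have "\<dots> \<le> d * (\<Sum>e\<in>set P. w e)"
    using d c P w by (auto intro: mult_left_mono mult_nonneg_nonneg sum_nonneg)
  also have "\<dots> = (\<Sum>e\<in>arcs G. w e * (if e \<in> set P then d else 0))"
    using fin P by (simp add: sum_distrib_left mult.commute if_distrib sum.inter_restrict[symmetric]
        Int_absorb1 cong: if_cong)
  finally show ?case
    using Cons by (simp add: Pd routed_amount_def arc_load_def distrib_left distrib_right sum.distrib)
qed

lemma hosts_gen_weak_duality:
  fixes c :: "nat \<Rightarrow> nat \<Rightarrow> real" and w :: "nat \<Rightarrow> real"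
  assumes H: "hosts_gen dir n G a" and fin: "finite (arcs G)" and w: "\<forall>e\<in>arcs G. 0 \<le> w e"
    and c: "\<And>P. is_path G P \<Longrightarrow> (dir \<longrightarrow> length P = 1) \<Longrightarrow>
              c (path_start G P) (path_end G P) \<le> (\<Sum>e\<in>set P. w e)"
  shows "(\<Sum>u\<in>{1..n}. \<Sum>v\<in>{1..n}. a u v * c u v) \<le> (\<Sum>e\<in>arcs G. w e) / (2 * real n - 1)"
proof -
  obtain F where
    F: "\<forall>(P, d) \<in> set F. is_path G P \<and> 0 \<le> d \<and> (dir \<longrightarrow> length P = 1)" and
    routed: "\<forall>u\<in>{1..n}. \<forall>v\<in>{1..n}. routed_amount G F u v = a u v" and
    load: "\<forall>e\<in>arcs G. arc_load G F e \<le> 1 / (2 * real n - 1)"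
    using H unfolding hosts_gen_iff by blast
  have "\<forall>(P, d)\<in>set F. 0 \<le> d \<and> set P \<subseteq> arcs G \<and>
          c (path_start G P) (path_end G P) \<le> (\<Sum>e\<in>set P. w e)"
    using F c by (auto simp: is_path_def)
  then have "(\<Sum>u\<in>{1..n}. \<Sum>v\<in>{1..n}. routed_amount G F u v * c u v)
      \<le> (\<Sum>e\<in>arcs G. w e * arc_load G F e)"
    by (rule weighted_routed_amount_le_weighted_load[OF finite_atLeastAtMost fin w])
  then have "(\<Sum>u\<in>{1..n}. \<Sum>v\<in>{1..n}. a u v * c u v) \<le> (\<Sum>e\<in>arcs G. w e * arc_load G F e)"
    using routed by simp
  also have "\<dots> \<le> (\<Sum>e\<in>arcs G. w e * (1 / (2 * real n - 1)))"
    using load w by (intro sum_mono mult_left_mono) auto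
  finally show ?thesis
    by (simp add: sum_divide_distrib)
qed

lemma sum_arcs_by_endpoints:
  assumes "finite (arcs G)" "finite V" "\<forall>e\<in>arcs G. src G e \<in> V \<and> tgt G e \<in> V"
  shows "(\<Sum>e\<in>arcs G. f e) = (\<Sum>u\<in>V. \<Sum>v\<in>V. \<Sum>e\<in>arcs_between G u v. f e)"
proof -
  have "(\<Sum>e\<in>arcs G. f e) = (\<Sum>p\<in>V \<times> V. \<Sum>e\<in>{e. e \<in> arcs G \<and> (src G e, tgt G e) = p}. f e)"
    using assms by (intro sum.group[symmetric]) auto
  also have "\<dots> = (\<Sum>u\<in>V. \<Sum>v\<in>V. \<Sum>e\<in>arcs_between G u v. f e)"
    unfolding sum.cartesian_product by (intro sum.cong) (auto simp: arcs_between_def)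
  finally show ?thesis .
qed

lemma sum_arcs_endpoint_function:
  assumes "finite (arcs G)" "finite V" "\<forall>e\<in>arcs G. src G e \<in> V \<and> tgt G e \<in> V"
  shows "(\<Sum>e\<in>arcs G. c (src G e) (tgt G e)) = (\<Sum>u\<in>V. \<Sum>v\<in>V. of_nat (card (arcs_between G u v)) * c u v)"
  unfolding sum_arcs_by_endpoints[OF assms]
  by (intro sum.cong refl) (simp add: arcs_between_def)

lemma regular_mgraph_degrees:
  assumes "regular_mgraph n r G" "x \<in> {1..n}"
  shows "(\<Sum>v\<in>{1..n}. card (arcs_between G x v)) = r" "(\<Sum>u\<in>{1..n}. card (arcs_between G u x)) = r"
proof -
  have fin: "finite (arcs G)" and ends: "\<forall>e\<in>arcs G. src G e \<in> {1..n} \<and> tgt G e \<in> {1..n}"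
    and deg: "card {e\<in>arcs G. src G e = x} = r" "card {e\<in>arcs G. tgt G e = x} = r"
    using assms unfolding regular_mgraph_def by auto
  have "card {e\<in>arcs G. src G e = x} = (\<Sum>e\<in>arcs G. of_bool (src G e = x))"
    using fin by (simp add: Int_def conj_commute)
  also have "\<dots> = (\<Sum>u\<in>{1..n}. \<Sum>v\<in>{1..n}. of_nat (card (arcs_between G u v)) * of_bool (u = x))"
    by (rule sum_arcs_endpoint_function[OF fin _ ends]) simp
  also have "\<dots> = (\<Sum>u\<in>{1..n}. if u = x then \<Sum>v\<in>{1..n}. card (arcs_between G u v) else 0)"
    by (intro sum.cong) auto
  also have "\<dots> = (\<Sum>v\<in>{1..n}. card (arcs_between G x v))"
    using assms(2) by simp
  finally show "(\<Sum>v\<in>{1..n}. card (arcs_between G x v)) = r" using deg by simp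
  have "card {e\<in>arcs G. tgt G e = x} = (\<Sum>e\<in>arcs G. of_bool (tgt G e = x))"
    using fin by (simp add: Int_def conj_commute)
  also have "\<dots> = (\<Sum>u\<in>{1..n}. \<Sum>v\<in>{1..n}. of_nat (card (arcs_between G u v)) * of_bool (v = x))"
    by (rule sum_arcs_endpoint_function[OF fin _ ends]) simp
  also have "\<dots> = (\<Sum>u\<in>{1..n}. card (arcs_between G u x))"
    using assms(2) by simp
  finally show "(\<Sum>u\<in>{1..n}. card (arcs_between G u x)) = r" using deg by simp
qed

lemma hosts_loop_cost_bound:
  assumes R: "regular_mgraph n r G" and H: "hosts n G a" and "0 \<le> \<alpha>" "\<alpha> \<le> 2 * \<beta>"
  shows "(\<Sum>u\<in>{1..n}. \<Sum>v\<in>{1..n}. a u v * loop_cost \<alpha> \<beta> u v)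
           \<le> (\<Sum>u\<in>{1..n}. \<Sum>v\<in>{1..n}. card (arcs_between G u v) * loop_cost \<alpha> \<beta> u v) / (2 * real n - 1)"
proof -
  have fin: "finite (arcs G)" and ends: "\<forall>e\<in>arcs G. src G e \<in> {1..n} \<and> tgt G e \<in> {1..n}"
    using R unfolding regular_mgraph_def by auto
  have "(\<Sum>u\<in>{1..n}. \<Sum>v\<in>{1..n}. a u v * loop_cost \<alpha> \<beta> u v)
          \<le> (\<Sum>e\<in>arcs G. loop_cost \<alpha> \<beta> (src G e) (tgt G e)) / (2 * real n - 1)"
    using H fin loop_cost_path_le assms(3,4) unfolding hosts_def
    by (intro hosts_gen_weak_duality) (auto simp: loop_cost_def)
  also have "(\<Sum>e\<in>arcs G. loop_cost \<alpha> \<beta> (src G e) (tgt G e))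
      = (\<Sum>u\<in>{1..n}. \<Sum>v\<in>{1..n}. card (arcs_between G u v) * loop_cost \<alpha> \<beta> u v)"
    by (rule sum_arcs_endpoint_function[OF fin _ ends]) simp
  finally show ?thesis .
qed

lemma sum_sum_of_bool_delta:
  fixes f :: "'a \<Rightarrow> 'b \<Rightarrow> 'c::semiring_1"
  assumes "finite A" "finite B" "u \<in> A" "v \<in> B"
  shows "(\<Sum>x\<in>A. \<Sum>y\<in>B. f x y * of_bool (x = u \<and> y = v)) = f u v"
proof -
  have "(\<Sum>y\<in>B. f x y * of_bool (x = u \<and> y = v)) = (if x = u then f x v else 0)" for x
    using assms by (cases "x = u") (simp_all add: if_distrib cong: if_cong)
  then show ?thesis
    using assms by simp
qed

lemma directly_hosts_le_arcs_between:
  assumes H: "directly_hosts n G a" and fin: "finite (arcs G)" and uv: "u \<in> {1..n}" "v \<in> {1..n}"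
  shows "a u v \<le> card (arcs_between G u v) / (2 * real n - 1)"
proof -
  let ?c = "\<lambda>x y. of_bool (x = u \<and> y = v) :: real" and ?w = "\<lambda>e. of_bool (e \<in> arcs_between G u v) :: real"
  have "a u v = (\<Sum>x\<in>{1..n}. \<Sum>y\<in>{1..n}. a x y * ?c x y)"
    by (rule sum_sum_of_bool_delta[symmetric, OF _ _ uv]) simp_all
  also have "\<dots> \<le> (\<Sum>e\<in>arcs G. ?w e) / (2 * real n - 1)"
  proof (rule hosts_gen_weak_duality[where dir=True and c="?c" and w="?w"])
    fix P assume "is_path G P" "True \<longrightarrow> length P = 1"
    then obtain e where "P = [e]" "e \<in> arcs G"
      by (auto simp: is_path_def length_Suc_conv)
    then show "?c (path_start G P) (path_end G P) \<le> (\<Sum>e\<in>set P. ?w e)"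
      by (simp add: path_start_def path_end_def arcs_between_def)
  qed (use H fin in \<open>auto simp: directly_hosts_def\<close>)
  also have "(\<Sum>e\<in>arcs G. ?w e) = card (arcs_between G u v)"
    using fin by (simp add: arcs_between_def Int_def)
  finally show ?thesis .
qed

lemma throughput_le:
  assumes "0 < n" and "\<And>\<theta>. hosts n G (\<lambda>i j. \<theta> * M i j) \<Longrightarrow> \<theta> \<le> b"
  shows "throughput n G M \<le> b"
  unfolding throughput_def
proof (rule cSup_least)
  have "hosts n G (\<lambda>i j. 0 * M i j)"
    using hosts_gen_zero[OF \<open>0 < n\<close>] by (simp add: hosts_def)
  then show "{\<theta>. hosts n G (\<lambda>i j. \<theta> * M i j)} \<noteq> {}"
    by blast
qed (use assms in auto)

lemma throughput_ge:
  assumes "hosts n G (\<lambda>i j. \<theta> * M i j)" and "\<And>\<theta>. hosts n G (\<lambda>i j. \<theta> * M i j) \<Longrightarrow> \<theta> \<le> b"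
  shows "\<theta> \<le> throughput n G M"
  unfolding throughput_def
  by (rule cSup_upper) (use assms in \<open>auto intro!: bdd_aboveI[of _ b]\<close>)

lemma weak_direct_throughput_le:
  fixes b :: real
  assumes n: "0 < n" and M: "\<forall>i\<in>{1..n}. \<forall>j\<in>{1..n}. 0 \<le> M i j"
    and bound: "\<And>M'. \<forall>i\<in>{1..n}. \<forall>j\<in>{1..n}. 0 \<le> M' i j \<and> M' i j \<le> M i j \<Longrightarrow>
           directly_hosts n G M' \<Longrightarrow> (\<Sum>i\<in>{1..n}. \<Sum>j\<in>{1..n}. M' i j) \<le> b * n"
  shows "weak_direct_throughput n G M \<le> b"
  unfolding weak_direct_throughput_def
proof (rule cSup_least, goal_cases)
  case 1
  have "directly_hosts n G (\<lambda>_ _. 0)"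
    using hosts_gen_zero[OF n] by (simp add: directly_hosts_def)
  then have "0 \<in> {\<eta>. \<exists>M'. (\<forall>i\<in>{1..n}. \<forall>j\<in>{1..n}. 0 \<le> M' i j \<and> M' i j \<le> M i j) \<and>
      (\<Sum>i\<in>{1..n}. \<Sum>j\<in>{1..n}. M' i j) = \<eta> * real n \<and> directly_hosts n G M'}"
    using M by (intro CollectI exI[of _ "\<lambda>_ _. 0"]) simp
  then show ?case by blast
next
  case (2 \<eta>)
  then obtain M' where "\<forall>i\<in>{1..n}. \<forall>j\<in>{1..n}. 0 \<le> M' i j \<and> M' i j \<le> M i j"
    and "(\<Sum>i\<in>{1..n}. \<Sum>j\<in>{1..n}. M' i j) = \<eta> * n" and "directly_hosts n G M'"
    by blast
  then have "\<eta> * n \<le> b * n"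
    using bound by metis
  then show ?case
    using n by simp
qed

lemma weak_direct_throughput_ge:
  assumes n: "0 < n" and M': "\<forall>i\<in>{1..n}. \<forall>j\<in>{1..n}. 0 \<le> M' i j \<and> M' i j \<le> M i j"
    and H: "directly_hosts n G M'"
  shows "(\<Sum>i\<in>{1..n}. \<Sum>j\<in>{1..n}. M' i j) / n \<le> weak_direct_throughput n G M"
  unfolding weak_direct_throughput_def
proof (rule cSup_upper, goal_cases)
  case 1
  show ?case
    using M' H n by auto
next
  case 2
  show ?case
  proof (rule bdd_aboveI, goal_cases)
    case (1 \<eta>)
    then obtain M'' where "\<forall>i\<in>{1..n}. \<forall>j\<in>{1..n}. M'' i j \<le> M i j"
      and "(\<Sum>i\<in>{1..n}. \<Sum>j\<in>{1..n}. M'' i j) = \<eta> * n"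
      by blast
    then have "\<eta> * n \<le> (\<Sum>i\<in>{1..n}. \<Sum>j\<in>{1..n}. M i j)"
      by (metis (no_types, lifting) sum_mono)
    then show "\<eta> \<le> (\<Sum>i\<in>{1..n}. \<Sum>j\<in>{1..n}. M i j) / n"
      using n by (simp add: field_simps)
  qed
qed

lemma two_vertices: "{1..2::nat} = {1, 2}"
  by auto

lemma regular_mgraph_2_3_arcs_between:
  assumes "regular_mgraph 2 3 G"
  shows "card (arcs_between G 1 1) \<le> 3"
    "card (arcs_between G 2 2) = card (arcs_between G 1 1)"
    "card (arcs_between G 1 2) = 3 - card (arcs_between G 1 1)"
    "card (arcs_between G 2 1) = 3 - card (arcs_between G 1 1)"
proof -
  have "card (arcs_between G 1 1) + card (arcs_between G 1 2) = 3"
    "card (arcs_between G 2 1) + card (arcs_between G 2 2) = 3"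
    "card (arcs_between G 1 2) + card (arcs_between G 2 2) = 3"
    using regular_mgraph_degrees[OF assms, of 1] regular_mgraph_degrees[OF assms, of 2]
    unfolding two_vertices by auto
  then show "card (arcs_between G 1 1) \<le> 3"
    "card (arcs_between G 2 2) = card (arcs_between G 1 1)"
    "card (arcs_between G 1 2) = 3 - card (arcs_between G 1 1)"
    "card (arcs_between G 2 1) = 3 - card (arcs_between G 1 1)"
    by linarith+
qed

lemma hosts_2_3_loop_cost_bound:
  fixes \<alpha> \<beta> :: real
  assumes R: "regular_mgraph 2 3 G" and "hosts 2 G a" "0 \<le> \<alpha>" "\<alpha> \<le> 2 * \<beta>"
  shows "(\<Sum>u\<in>{1..2}. \<Sum>v\<in>{1..2}. a u v * loop_cost \<alpha> \<beta> u v)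
           \<le> 2 * (card (arcs_between G 1 1) * \<alpha> + (3 - real (card (arcs_between G 1 1))) * \<beta>) / 3"
proof -
  have "real (3 - card (arcs_between G 1 1)) = 3 - real (card (arcs_between G 1 1))"
    using regular_mgraph_2_3_arcs_between(1)[OF R] by simp
  then show ?thesis
    using hosts_loop_cost_bound[OF assms, unfolded two_vertices] regular_mgraph_2_3_arcs_between(2-4)[OF R]
    unfolding two_vertices by (simp add: loop_cost_def algebra_simps)
qed

lemma hosts_M1_le_one:
  assumes "regular_mgraph 2 3 G" "hosts 2 G (\<lambda>i j. \<theta> * M1 i j)"
  shows "\<theta> \<le> 1"
  using hosts_2_3_loop_cost_bound[OF assms, of 1 1]
  unfolding two_vertices by (simp add: M1_def loop_cost_def)

lemma throughput_M2_le:
  assumes R: "regular_mgraph 2 3 G"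
  shows "throughput 2 G M2 \<le> 50/57"
proof (rule throughput_le)
  fix \<theta> assume H: "hosts 2 G (\<lambda>i j. \<theta> * M2 i j)"
  let ?k = "card (arcs_between G 1 1)"
  have cost: "(\<Sum>u\<in>{1..2}. \<Sum>v\<in>{1..2}. \<theta> * M2 u v * loop_cost \<alpha> \<beta> u v) = \<theta> * (9/5 * \<alpha> + 1/5 * \<beta>)"
    for \<alpha> \<beta> unfolding two_vertices by (simp add: M2_def loop_cost_def algebra_simps)
  show "\<theta> \<le> 50/57"
  proof (cases "?k \<le> 2")
    case True
    then have "real ?k * 2 + (3 - real ?k) \<le> 5" by linarith
    then show ?thesis
      using hosts_2_3_loop_cost_bound[OF R H, of 2 1] cost by simp
  next
    case False
    then have "?k = 3" using regular_mgraph_2_3_arcs_between(1)[OF R] by simp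
    then show ?thesis
      using hosts_2_3_loop_cost_bound[OF R H, of 0 1] cost by simp
  qed
qed simp

lemma weak_direct_throughput_M1_le:
  assumes R: "regular_mgraph 2 3 G"
  shows "weak_direct_throughput 2 G M1 \<le> 5/6"
proof (rule weak_direct_throughput_le)
  fix M' assume M': "\<forall>i\<in>{1..2}. \<forall>j\<in>{1..2}. 0 \<le> M' i j \<and> M' i j \<le> M1 i j" and H: "directly_hosts 2 G M'"
  have fin: "finite (arcs G)" using R by (simp add: regular_mgraph_def)
  have entry: "M' u v \<le> 1/2" "M' u v \<le> card (arcs_between G u v) / 3" if "u \<in> {1, 2}" "v \<in> {1, 2}" for u v
    using M' directly_hosts_le_arcs_between[OF H fin, of u v] that by (auto simp: M1_def)
  have row: "x + y \<le> 5/6" if "x \<le> 1/2" "x \<le> real k / 3" "y \<le> 1/2" "y \<le> real l / 3" "k + l = 3"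
    for x y :: real and k l :: nat
  proof -
    have "k \<le> 1 \<or> l \<le> 1" using \<open>k + l = 3\<close> by linarith
    then show ?thesis using that by (auto dest!: of_nat_mono[where 'a = real])
  qed
  have degrees: "card (arcs_between G 1 1) + card (arcs_between G 1 2) = 3"
    "card (arcs_between G 2 1) + card (arcs_between G 2 2) = 3"
    using regular_mgraph_2_3_arcs_between[OF R] by simp_all
  have "M' 1 1 + M' 1 2 \<le> 5/6" "M' 2 1 + M' 2 2 \<le> 5/6"
    by (rule row[OF entry entry]; use degrees in simp)+
  then show "(\<Sum>i\<in>{1..2}. \<Sum>j\<in>{1..2}. M' i j) \<le> 5/6 * real 2"
    unfolding two_vertices by simp
qed (simp_all add: M1_def)

definition one_loop_graph :: mgraph where
  "one_loop_graph =
     \<lparr>arcs = {0..5}, src = (\<lambda>e. if e \<le> 2 then 1 else 2), tgt = (\<lambda>e. if e \<in> {0, 3, 4} then 1 else 2)\<rparr>"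

definition three_loops_graph :: mgraph where
  "three_loops_graph = \<lparr>arcs = {0..5}, src = (\<lambda>e. if e \<le> 2 then 1 else 2), tgt = (\<lambda>e. if e \<le> 2 then 1 else 2)\<rparr>"

lemma six_arcs: "{0..5::nat} = {0, 1, 2, 3, 4, 5}"
  by auto

lemma arcs_with_endpoint:
  "{e \<in> {0..5::nat}. (if e \<le> 2 then 1 else 2) = (v::nat)} =
     (if v = 1 then {0, 1, 2} else if v = 2 then {3, 4, 5} else {})"
  "{e \<in> {0..5::nat}. (if e \<in> {0, 3, 4} then 1 else 2) = (v::nat)} =
     (if v = 1 then {0, 3, 4} else if v = 2 then {1, 2, 5} else {})"
  by auto

lemma regular_one_loop_graph: "regular_mgraph 2 3 one_loop_graph"
  unfolding regular_mgraph_def one_loop_graph_def mgraph.select_convs arcs_with_endpoint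
  by (simp add: two_vertices)

lemma regular_three_loops_graph: "regular_mgraph 2 3 three_loops_graph"
  unfolding regular_mgraph_def three_loops_graph_def mgraph.select_convs arcs_with_endpoint
  by (simp add: two_vertices)

lemma one_loop_graph_hosts: "hosts 2 one_loop_graph (\<lambda>i j. 8/9 * M1 i j)"
  unfolding hosts_def hosts_gen_iff
proof (intro exI conjI)
  let ?F = "[([1], 2/9), ([2], 2/9), ([3], 2/9), ([4], 2/9),
             ([0], 1/3), ([1, 3], 1/9), ([5], 1/3), ([4, 2], 1/9)] :: (nat list \<times> real) list"
  show "\<forall>(P, d)\<in>set ?F. is_path one_loop_graph P \<and> 0 \<le> d \<and> (False \<longrightarrow> length P = 1)"
    by (simp add: one_loop_graph_def)
  show "\<forall>u\<in>{1..2}. \<forall>v\<in>{1..2}. routed_amount one_loop_graph ?F u v = 8/9 * M1 u v"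
    unfolding two_vertices
    by (simp add: routed_amount_def path_start_def path_end_def one_loop_graph_def M1_def)
  show "\<forall>e\<in>arcs one_loop_graph. arc_load one_loop_graph ?F e \<le> 1 / (2 * real 2 - 1)"
    by (simp add: arc_load_def one_loop_graph_def six_arcs)
qed

lemma throughput_one_loop_graph: "8/9 \<le> throughput 2 one_loop_graph M1"
  using one_loop_graph_hosts hosts_M1_le_one[OF regular_one_loop_graph] by (rule throughput_ge)

lemma three_loops_graph_directly_hosts:
  "directly_hosts 2 three_loops_graph (\<lambda>i j. if i = j then 9/10 else 0)"
  unfolding directly_hosts_def hosts_gen_iff
proof (intro exI conjI)
  let ?F = "map (\<lambda>e. ([e], 3/10)) [0, 1, 2, 3, 4, 5] :: (nat list \<times> real) list"
  show "\<forall>(P, d)\<in>set ?F. is_path three_loops_graph P \<and> 0 \<le> d \<and> (True \<longrightarrow> length P = 1)"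
    by (simp add: three_loops_graph_def)
  show "\<forall>u\<in>{1..2}. \<forall>v\<in>{1..2}. routed_amount three_loops_graph ?F u v = (if u = v then 9/10 else 0)"
    unfolding two_vertices
    by (simp add: routed_amount_def path_start_def path_end_def three_loops_graph_def)
  show "\<forall>e\<in>arcs three_loops_graph. arc_load three_loops_graph ?F e \<le> 1 / (2 * real 2 - 1)"
    by (simp add: arc_load_def three_loops_graph_def six_arcs)
qed

lemma weak_direct_throughput_three_loops_graph: "9/10 \<le> weak_direct_throughput 2 three_loops_graph M2"
  using weak_direct_throughput_ge[OF _ _ three_loops_graph_directly_hosts, of M2]
  by (simp add: two_vertices M2_def)

theorem mainTheorem4:
  shows "((\<exists>G. regular_mgraph 2 3 G \<and> throughput 2 G M1 \<ge> 8/9) \<and>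
          (\<forall>G. regular_mgraph 2 3 G \<longrightarrow> \<not> (weak_direct_throughput 2 G M1 > 5/6))) \<and>
         ((\<exists>G. regular_mgraph 2 3 G \<and> weak_direct_throughput 2 G M2 \<ge> 9/10) \<and>
          (\<forall>G. regular_mgraph 2 3 G \<longrightarrow> \<not> (throughput 2 G M2 \<ge> 9/10)))"
proof (intro conjI allI impI)
  show "\<exists>G. regular_mgraph 2 3 G \<and> throughput 2 G M1 \<ge> 8/9"
    using regular_one_loop_graph throughput_one_loop_graph by blast
  show "\<exists>G. regular_mgraph 2 3 G \<and> weak_direct_throughput 2 G M2 \<ge> 9/10"
    using regular_three_loops_graph weak_direct_throughput_three_loops_graph by blast
  fix G assume "regular_mgraph 2 3 G"
  then show "\<not> weak_direct_throughput 2 G M1 > 5/6" and "\<not> throughput 2 G M2 \<ge> 9/10"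
    using weak_direct_throughput_M1_le throughput_M2_le by fastforce+
qed

end
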